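(* Let $\sim$ (for each $N$) be an equivalence relation on $\{1,\dots,N\}^2$ with $(p,q)\sim(q,p)$ satisfying conditions (C1), (C2), (C3). Let $k$ be even and let $\pi$ be a crossing pair-partition of $\{1,\dots,k\}$. Then $$\frac{1}{N^{k/2+1}}\,\#\mathcal E^{(N)}_k(\pi)\xrightarrow{N\to\infty}0.$$
   Context: Conditions on $\sim$ (as $N\to\infty$): (C1) $\max_p\#\{(q,r,s)\in\{1,\dots,N\}^3:(p,q)\sim(r,s)\}=o(N^2)$; (C2) $\max_{p,q,r}\#\{s:(p,q)\sim(r,s)\}\le B<\infty$ with $B$ independent of $N$; (C3) $\#\{(p,q,r)\in\{1,\dots,N\}^3:(p,q)\sim(q,r),\ r\neq p\}=o(N^2)$. A pair-partition of $\{1,\dots,k\}$ is a partition all of whose blocks have exactly two elements; it is crossing if there exist $1\le a<b<c<d\le k$ with $\{a,c\},\{b,d\}\in\pi$. For a partition $\pi$ of $\{1,\dots,k\}$, $\mathcal E^{(N)}_k(\pi)$ is the set of $i=(i_1,\dots,i_k)\in\{1,\dots,N\}^k$ such that, with $i_{k+1}:=i_1$, for all $l,m$: $l,m$ lie in the same block of $\pi$ iff $(i_l,i_{l+1})\sim(i_m,i_{m+1})$. *)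

theory Defs
  imports Complex_Main "HOL-Library.Disjoint_Sets"
begin

definition cyc_next :: "nat \<Rightarrow> nat \<Rightarrow> nat" where
  "cyc_next k l = (if l = k then 1 else l + 1)"

definition pair_partition :: "nat \<Rightarrow> nat set set \<Rightarrow> bool" where
  "pair_partition k \<pi> \<longleftrightarrow> partition_on {1..k} \<pi> \<and> (\<forall>B\<in>\<pi>. card B = 2)"

definition crossing :: "nat \<Rightarrow> nat set set \<Rightarrow> bool" where
  "crossing k \<pi> \<longleftrightarrow> (\<exists>a b c d. 1 \<le> a \<and> a < b \<and> b < c \<and> c < d \<and> d \<le> k
      \<and> {a, c} \<in> \<pi> \<and> {b, d} \<in> \<pi>)"

text \<open>The set E_k^(N)(pi); tuples i are functions on {1..k} (extensional) with values in {1..N};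
  R N is the relation ~ on {1..N}^2 for the given N.\<close>
definition E_set :: "(nat \<Rightarrow> ((nat \<times> nat) \<times> (nat \<times> nat)) set) \<Rightarrow> nat \<Rightarrow> nat \<Rightarrow> nat set set
    \<Rightarrow> (nat \<Rightarrow> nat) set" where
  "E_set R N k \<pi> = {i \<in> {1..k} \<rightarrow>\<^sub>E {1..N}.
     \<forall>l\<in>{1..k}. \<forall>m\<in>{1..k}.
       (\<exists>B\<in>\<pi>. l \<in> B \<and> m \<in> B) \<longleftrightarrow> ((i l, i (cyc_next k l)), (i m, i (cyc_next k m))) \<in> R N}"

end

theory Submission
  imports Defs
begin

text \<open>Replace the pair partition by its partner involution \<open>p\<close> and count the larger set of tuples
  that only respect the pairings, \<open>(i l, i (l + 1)) \<sim> (i (p l), i (p l + 1))\<close>. Revealing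
  \<open>i 1, \<dots>, i k\<close> in order, the \<open>k/2 + 1\<close> free steps have \<open>N\<close> choices each and the \<open>k/2 - 1\<close>
  closing steps at most \<open>B\<close> by (C2). For a crossing pairing, let \<open>m\<close> be the first closing edge and
  \<open>l = p m\<close>. If \<open>l + 1 < m\<close>, the values at \<open>l + 1, m, m + 1\<close> form a partner triple of \<open>i l\<close>,
  with \<open>o(N\<^sup>2)\<close> choices by (C1) in place of the \<open>N\<^sup>2\<close> of two free steps. If \<open>m = l + 1\<close>, either
  \<open>i (l + 2) \<noteq> i l\<close> and \<open>(i l, i (l + 1), i (l + 2))\<close> is one of \<open>o(N\<^sup>2)\<close> backtracking triples by
  (C3), or \<open>i (l + 2) = i l\<close> and deleting positions \<open>l, l + 1\<close> leaves a tuple for a crossing pairing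
  of \<open>k - 2\<close> points, at the cost of a factor \<open>N\<close> for \<open>i (l + 1)\<close>; induction on \<open>k\<close> finishes.\<close>

lemma card_image_le_if_factors:
  assumes "finite (\<phi> ` X)" and "\<And>x y. x \<in> X \<Longrightarrow> y \<in> X \<Longrightarrow> \<phi> x = \<phi> y \<Longrightarrow> f x = f y"
  shows "card (f ` X) \<le> card (\<phi> ` X)"
proof -
  have "f ` X = (f \<circ> inv_into X \<phi>) ` \<phi> ` X"
  proof (intro set_eqI iffI)
    fix z assume "z \<in> f ` X"
    then obtain x where "x \<in> X" "z = f x" by blast
    moreover have "inv_into X \<phi> (\<phi> x) \<in> X" "\<phi> (inv_into X \<phi> (\<phi> x)) = \<phi> x"
      using \<open>x \<in> X\<close> by (auto intro: inv_into_into f_inv_into_f)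
    ultimately show "z \<in> (f \<circ> inv_into X \<phi>) ` \<phi> ` X"
      using assms(2) by (metis comp_apply image_eqI)
  qed (auto intro: inv_into_into)
  then show ?thesis
    using card_image_le[OF assms(1)] by simp
qed

lemma card_restrict_triple_le:
  assumes "finite C" and "\<And>g. g \<in> X \<Longrightarrow> (g a, g b, g c) \<in> C"
  shows "card ((\<lambda>g. restrict g {a, b, c}) ` X) \<le> card C"
proof -
  have sub: "(\<lambda>g. (g a, g b, g c)) ` X \<subseteq> C"
    using assms(2) by blast
  have "card ((\<lambda>g. restrict g {a, b, c}) ` X) \<le> card ((\<lambda>g. (g a, g b, g c)) ` X)"
    using finite_subset[OF sub assms(1)]
    by (rule card_image_le_if_factors) (auto simp: fun_eq_iff)
  also have "\<dots> \<le> card C"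
    using sub assms(1) by (rule card_mono[rotated])
  finally show ?thesis .
qed

lemma card_image_restrict_le_prod:
  fixes S :: "(nat \<Rightarrow> 'b) set" and U :: "nat \<Rightarrow> nat set"
  assumes "finite S" and "U 0 = {}"
    and "\<And>t h. t < n \<Longrightarrow> card ((\<lambda>g. restrict g (U (Suc t))) ` {g \<in> S. restrict g (U t) = h}) \<le> c t"
  shows "card ((\<lambda>g. restrict g (U n)) ` S) \<le> (\<Prod>t<n. c t)"
  using assms(3)
proof (induction n)
  case 0
  have "\<forall>g\<in>S. restrict g (U 0) = (\<lambda>_. undefined)"
    using assms(2) by auto
  then show ?case
    using assms(1) by (auto simp: card_le_Suc0_iff_eq)
next
  case (Suc n)
  let ?A = "(\<lambda>g. restrict g (U n)) ` S"
  let ?fibre = "\<lambda>h. (\<lambda>g. restrict g (U (Suc n))) ` {g \<in> S. restrict g (U n) = h}"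
  have "(\<lambda>g. restrict g (U (Suc n))) ` S = (\<Union>h\<in>?A. ?fibre h)"
    by auto
  also have "card \<dots> \<le> (\<Sum>h\<in>?A. card (?fibre h))"
    using assms(1) by (intro card_UN_le) simp
  also have "\<dots> \<le> (\<Sum>h\<in>?A. c n)"
    by (intro sum_mono Suc.prems) simp
  also have "\<dots> = card ?A * c n"
    by simp
  also have "\<dots> \<le> (\<Prod>t<n. c t) * c n"
    by (intro mult_right_mono Suc.IH Suc.prems) simp_all
  finally show ?case
    by (simp only: prod.lessThan_Suc)
qed

lemma prod_le_cases:
  fixes c :: "nat \<Rightarrow> nat"
  assumes "s < k" "T \<subseteq> {..<k}" "s \<notin> T" "1 \<le> B"
    and "\<And>t. t < k \<Longrightarrow> c t \<le> (if t = s then K else if t \<in> T then N else B)"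
  shows "(\<Prod>t<k. c t) \<le> K * N ^ card T * B ^ k"
proof -
  have "(\<Prod>t<k. c t) \<le> (\<Prod>t<k. (if t = s then K else 1) * ((if t \<in> T then N else 1) * B))"
  proof (rule prod_mono)
    fix t assume "t \<in> {..<k}"
    have "x \<le> x * B" for x :: nat
      using assms(4) by simp
    then show "0 \<le> c t \<and> c t \<le> (if t = s then K else 1) * ((if t \<in> T then N else 1) * B)"
      using assms(3) assms(5)[of t] \<open>t \<in> {..<k}\<close> by (auto intro: order.trans)
  qed
  also have "\<dots> = (\<Prod>t<k. if t = s then K else 1) * ((\<Prod>t<k. if t \<in> T then N else 1) * B ^ k)"
    by (simp add: prod.distrib)
  also have "(\<Prod>t<k. if t = s then K else 1) = K"
    using assms(1) by simp
  also have "(\<Prod>t<k. if t \<in> T then N else 1) = N ^ card T"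
    using assms(2) by (simp add: prod.If_cases Int_absorb1)
  finally show ?thesis
    by simp
qed

lemma ratio_le_split:
  fixes x y a b N e :: nat
  assumes "x \<le> N * y + a * N ^ (e - 1) * b" "1 \<le> e" "1 \<le> N"
  shows "real x / real N ^ (e + 1) \<le> real y / real N ^ e + real b * (real a / real N ^ 2)"
proof -
  have N: "real N \<noteq> 0"
    using assms(3) by simp
  have "real x / real N ^ (e + 1) \<le> real (N * y + a * N ^ (e - 1) * b) / real N ^ (e + 1)"
    using assms(1) by (intro divide_right_mono) (simp_all only: of_nat_le_iff zero_le_power of_nat_0_le_iff)
  also have "\<dots> = real N * real y / (real N * real N ^ e)
      + real a * real N ^ (e - 1) * real b / (real N ^ (e - 1) * real N ^ 2)"
    using assms(2) by (simp add: add_divide_distrib flip: power_add)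
  also have "\<dots> = real y / real N ^ e + real b * (real a / real N ^ 2)"
    using N by simp
  finally show ?thesis .
qed

lemma LIMSEQ_zero_if_le:
  fixes f g :: "nat \<Rightarrow> real"
  assumes "g \<longlonglongrightarrow> 0" "\<And>N. 1 \<le> N \<Longrightarrow> f N \<le> g N" "\<And>N. 0 \<le> f N"
  shows "f \<longlonglongrightarrow> 0"
proof (rule tendsto_sandwich[OF always_eventually _ tendsto_const assms(1)])
  show "\<forall>N. 0 \<le> f N"
    using assms(3) by blast
  show "\<forall>\<^sub>F N in sequentially. f N \<le> g N"
    using eventually_ge_at_top[of 1] by (rule eventually_mono) (rule assms(2))
qed

lemma card_restrict_Un_le:
  assumes "finite X"
    and "\<And>g g'. g \<in> X \<Longrightarrow> g' \<in> X \<Longrightarrow> restrict g V = restrict g' V"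
    and "\<And>g g'. g \<in> X \<Longrightarrow> g' \<in> X \<Longrightarrow> \<phi> g = \<phi> g' \<Longrightarrow> restrict g W = restrict g' W"
  shows "card ((\<lambda>g. restrict g (V \<union> W)) ` X) \<le> card (\<phi> ` X)"
proof (rule card_image_le_if_factors)
  show "finite (\<phi> ` X)"
    using assms(1) by simp
  fix g g' assume "g \<in> X" "g' \<in> X" "\<phi> g = \<phi> g'"
  then have V: "restrict g V = restrict g' V" and W: "restrict g W = restrict g' W"
    using assms(2,3) by blast+
  show "restrict g (V \<union> W) = restrict g' (V \<union> W)"
  proof
    fix x
    show "restrict g (V \<union> W) x = restrict g' (V \<union> W) x"
      using fun_cong[OF V, of x] fun_cong[OF W, of x] by (cases "x \<in> V"; cases "x \<in> W") simp_all
  qed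
qed

lemma image_restrict_PiE: "S \<subseteq> A \<rightarrow>\<^sub>E B \<Longrightarrow> (\<lambda>g. restrict g A) ` S = S"
proof -
  assume "S \<subseteq> A \<rightarrow>\<^sub>E B"
  then have "(\<lambda>g. restrict g A) ` S = (\<lambda>g. g) ` S"
    by (intro image_cong[OF refl] PiE_restrict) blast
  then show ?thesis
    by simp
qed

type_synonym pair_relations = "nat \<Rightarrow> ((nat \<times> nat) \<times> (nat \<times> nat)) set"

definition pairing :: "nat \<Rightarrow> (nat \<Rightarrow> nat) \<Rightarrow> bool" where
  "pairing k p \<longleftrightarrow> (\<forall>l\<in>{1..k}. p l \<in> {1..k} \<and> p l \<noteq> l \<and> p (p l) = l)"

definition crossing_pairing :: "nat \<Rightarrow> (nat \<Rightarrow> nat) \<Rightarrow> bool" where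
  "crossing_pairing k p \<longleftrightarrow>
     (\<exists>a b c d. 1 \<le> a \<and> a < b \<and> b < c \<and> c < d \<and> d \<le> k \<and> p a = c \<and> p b = d)"

definition pairing_tuples ::
    "pair_relations \<Rightarrow> nat \<Rightarrow> nat \<Rightarrow> (nat \<Rightarrow> nat) \<Rightarrow> (nat \<Rightarrow> nat) set" where
  "pairing_tuples R N k p = {i \<in> {1..k} \<rightarrow>\<^sub>E {1..N}.
     \<forall>l\<in>{1..k}. ((i l, i (cyc_next k l)), (i (p l), i (cyc_next k (p l)))) \<in> R N}"

text \<open>Step \<open>t\<close> of revealing a tuple chooses the value at position \<open>t + 1\<close>; it is free unless
  the edge \<open>(t, t + 1)\<close> closes a pair whose opening edge has already been revealed.\<close>
definition free_steps :: "nat \<Rightarrow> (nat \<Rightarrow> nat) \<Rightarrow> nat set" where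
  "free_steps k p = {t. t < k \<and> (t = 0 \<or> t < p t)}"

lemma pairingD:
  assumes "pairing k p" "l \<in> {1..k}"
  shows "p l \<in> {1..k}" "p l \<noteq> l" "p (p l) = l"
  using assms unfolding pairing_def by auto

lemma finite_pairing_tuples: "finite (pairing_tuples R N k p)"
  by (rule finite_subset[of _ "{1..k} \<rightarrow>\<^sub>E {1..N}"]) (auto simp: pairing_tuples_def finite_PiE)

lemma pairing_tuples_range: "i \<in> pairing_tuples R N k p \<Longrightarrow> x \<in> {1..k} \<Longrightarrow> i x \<in> {1..N}"
  unfolding pairing_tuples_def by (auto simp: PiE_iff)

lemma pairing_tuples_related:
  "i \<in> pairing_tuples R N k p \<Longrightarrow> l \<in> {1..k} \<Longrightarrow>
     ((i l, i (cyc_next k l)), (i (p l), i (cyc_next k (p l)))) \<in> R N"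
  unfolding pairing_tuples_def by auto

lemma card_free_steps:
  assumes p: "pairing k p" and "1 \<le> k"
  shows "card (free_steps k p) = k div 2 + 1"
proof -
  define openers where "openers = {t\<in>{1..k}. t < p t}"
  define closers where "closers = {t\<in>{1..k}. p t < t}"
  have "bij_betw p openers closers"
  proof (rule bij_betw_byWitness[where f' = p])
    show "\<forall>t\<in>openers. p (p t) = t" "\<forall>t\<in>closers. p (p t) = t"
      using pairingD(3)[OF p] by (simp_all add: openers_def closers_def)
    show "p ` openers \<subseteq> closers" "p ` closers \<subseteq> openers"
      using pairingD[OF p] by (force simp: openers_def closers_def)+
  qed
  then have "card openers = card closers"
    by (rule bij_betw_same_card)
  moreover have "openers \<union> closers = {1..k}"
    using pairingD(2)[OF p] by (force simp: openers_def closers_def nat_neq_iff)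
  moreover have "openers \<inter> closers = {}"
    by (auto simp: openers_def closers_def)
  ultimately have "2 * card openers = k"
    using card_Un_disjoint[of openers closers] by (simp add: openers_def closers_def)
  moreover have "free_steps k p = insert 0 openers"
    using assms pairingD(1)[OF p] by (force simp: free_steps_def openers_def)
  moreover have "0 \<notin> openers"
    by (simp add: openers_def)
  ultimately show ?thesis
    by (simp add: openers_def)
qed

lemma card_free_steps_Diff:
  assumes "pairing k p" "1 \<le> k" "a \<in> free_steps k p" "b \<in> free_steps k p" "a \<noteq> b"
  shows "card (free_steps k p - {a, b}) = k div 2 - 1"
  using assms card_free_steps[OF assms(1,2)] by (simp add: card_Diff_subset free_steps_def)

lemma crossing_pairing_first_closer:
  assumes p: "pairing k p" and cr: "crossing_pairing k p"
  obtains l m where "1 \<le> l" "l < m" "m < k" "p l = m" "\<And>t. 1 \<le> t \<Longrightarrow> t < m \<Longrightarrow> t < p t"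
proof -
  obtain a b c d where abcd: "1 \<le> a" "a < b" "b < c" "c < d" "d \<le> k" "p a = c" "p b = d"
    using cr unfolding crossing_pairing_def by blast
  define closer where "closer m \<longleftrightarrow> 1 \<le> m \<and> m \<le> k \<and> p m < m" for m
  define m where "m = (LEAST m. closer m)"
  have "closer c"
    using pairingD(3)[OF p, of a] abcd by (auto simp: closer_def)
  then have m: "closer m" "m \<le> c"
    unfolding m_def by (auto intro: LeastI Least_le)
  have "t < p t" if "1 \<le> t" "t < m" for t
  proof -
    have "\<not> closer t"
      using \<open>t < m\<close> unfolding m_def by (rule not_less_Least)
    then show ?thesis
      using that m pairingD(2)[OF p, of t] by (auto simp: closer_def)
  qed
  moreover have "p (p m) = m" "1 \<le> p m"
    using pairingD[OF p, of m] m by (auto simp: closer_def)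
  ultimately show ?thesis
    using that[of "p m" m] m abcd by (auto simp: closer_def)
qed

text \<open>The positions known after step \<open>t\<close> when the values \<open>i 1, \<dots>, i k\<close> are revealed one at a time,
  except that the whole block \<open>G\<close> is revealed at step \<open>s\<close>.\<close>
definition revealed :: "nat \<Rightarrow> nat set \<Rightarrow> nat \<Rightarrow> nat set" where
  "revealed s G t = {1..t} \<union> (if s < t then G else {})"

locale completion_bounded =
  fixes R :: pair_relations and B :: nat
  assumes completions_le: "\<And>N p q r. p \<in> {1..N} \<Longrightarrow> q \<in> {1..N} \<Longrightarrow> r \<in> {1..N} \<Longrightarrow>
      card {s \<in> {1..N}. ((p, q), (r, s)) \<in> R N} \<le> B"
    and one_le_B: "1 \<le> B"
begin

lemma card_next_value_le:
  assumes p: "pairing k p" and X: "X \<subseteq> pairing_tuples R N k p" and t: "t < k"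
    and agree: "\<And>g g' x. g \<in> X \<Longrightarrow> g' \<in> X \<Longrightarrow> x \<in> {1..t} \<Longrightarrow> g x = g' x"
  shows "card ((\<lambda>g. g (Suc t)) ` X) \<le> (if t \<in> free_steps k p then N else B)"
proof (cases "t \<in> free_steps k p")
  case True
  have "(\<lambda>g. g (Suc t)) ` X \<subseteq> {1..N}"
    using X t pairing_tuples_range[of _ R N k p "Suc t"] by auto
  then show ?thesis
    using True card_mono[of "{1..N}"] by simp
next
  case False
  then have t': "1 \<le> t" "p t < t"
    using t pairingD(2)[OF p, of t] by (auto simp: free_steps_def)
  then have pt: "p t \<in> {1..k}" "p (p t) = t"
    using pairingD[OF p, of t] t by auto
  have "card ((\<lambda>g. g (Suc t)) ` X) \<le> B"
  proof (cases "X = {}")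
    case False
    then obtain g0 where g0: "g0 \<in> X"
      by blast
    let ?completions = "{s \<in> {1..N}. ((g0 (p t), g0 (Suc (p t))), (g0 t, s)) \<in> R N}"
    have "(\<lambda>g. g (Suc t)) ` X \<subseteq> ?completions"
    proof (rule image_subsetI)
      fix g assume g: "g \<in> X"
      have "cyc_next k (p t) = Suc (p t)" "cyc_next k t = Suc t"
        using t t' by (auto simp: cyc_next_def)
      then have "((g (p t), g (Suc (p t))), (g t, g (Suc t))) \<in> R N"
        using pairing_tuples_related[of g R N k p "p t"] g X pt by auto
      moreover have "g (p t) = g0 (p t)" "g (Suc (p t)) = g0 (Suc (p t))" "g t = g0 t"
        using agree[OF g g0] t' pt by auto
      moreover have "g (Suc t) \<in> {1..N}"
        using pairing_tuples_range[of g] g X t by auto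
      ultimately show "g (Suc t) \<in> ?completions"
        by simp
    qed
    then have "card ((\<lambda>g. g (Suc t)) ` X) \<le> card ?completions"
      by (rule card_mono[rotated]) simp
    also have "\<dots> \<le> B"
      using g0 X pt t t' pairing_tuples_range[of g0 R N k p]
      by (intro completions_le) (auto simp del: Suc_le_mono)
    finally show ?thesis .
  qed (simp only: image_empty card.empty le0)
  then show ?thesis
    using False by simp
qed

lemma card_reveal_step_le:
  assumes p: "pairing k p" and S: "S \<subseteq> pairing_tuples R N k p"
    and G: "G \<subseteq> {Suc s..k}" "Suc s \<in> G"
    and block: "\<And>h. card ((\<lambda>g. restrict g G) ` {g \<in> S. restrict g {1..s} = h}) \<le> K"
    and t: "t < k"
  shows "card ((\<lambda>g. restrict g (revealed s G (Suc t))) ` {g \<in> S. restrict g (revealed s G t) = h})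
    \<le> (if t = s then K else if Suc t \<in> G then 1 else if t \<in> free_steps k p then N else B)"
proof -
  let ?X = "{g \<in> S. restrict g (revealed s G t) = h}"
  have finX: "finite ?X"
    using finite_subset[OF S finite_pairing_tuples] by simp
  have agree: "restrict g (revealed s G t) = restrict g' (revealed s G t)" if "g \<in> ?X" "g' \<in> ?X" for g g'
    using that by simp
  consider "t = s" | "t \<noteq> s" "Suc t \<in> G" | "t \<noteq> s" "Suc t \<notin> G"
    by blast
  then show ?thesis
  proof cases
    case 1
    then have "revealed s G (Suc t) = revealed s G t \<union> G" "revealed s G t = {1..s}"
      using G by (auto simp: revealed_def le_Suc_eq)
    then have "card ((\<lambda>g. restrict g (revealed s G (Suc t))) ` ?X) \<le> card ((\<lambda>g. restrict g G) ` ?X)"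
      using card_restrict_Un_le[OF finX agree, of "\<lambda>g. restrict g G" G] by simp
    also have "\<dots> \<le> K"
      using block \<open>revealed s G t = {1..s}\<close> by simp
    finally show ?thesis
      using 1 by simp
  next
    case 2
    then have "revealed s G (Suc t) = revealed s G t"
      using G by (auto simp: revealed_def le_Suc_eq)
    then have "(\<lambda>g. restrict g (revealed s G (Suc t))) ` ?X \<subseteq> {h}"
      by auto
    then show ?thesis
      using 2 card_mono[of "{h}"] by simp
  next
    case 3
    then have "revealed s G (Suc t) = revealed s G t \<union> {Suc t}"
      by (auto simp: revealed_def le_Suc_eq)
    then have "card ((\<lambda>g. restrict g (revealed s G (Suc t))) ` ?X) \<le> card ((\<lambda>g. g (Suc t)) ` ?X)"
      using card_restrict_Un_le[OF finX agree, of "\<lambda>g. g (Suc t)" "{Suc t}"] by (simp add: fun_eq_iff)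
    also have "\<dots> \<le> (if t \<in> free_steps k p then N else B)"
    proof (rule card_next_value_le[OF p _ t])
      show "?X \<subseteq> pairing_tuples R N k p"
        using S by blast
      fix g g' x assume "g \<in> ?X" "g' \<in> ?X" "x \<in> {1..t}"
      then have "restrict g (revealed s G t) x = restrict g' (revealed s G t) x" "x \<in> revealed s G t"
        by (auto simp: revealed_def)
      then show "g x = g' x"
        by simp
    qed
    finally show ?thesis
      using 3 by simp
  qed
qed

lemma card_le_reveal:
  assumes p: "pairing k p" and S: "S \<subseteq> pairing_tuples R N k p"
    and G: "s < k" "G \<subseteq> {Suc s..k}" "Suc s \<in> G"
    and block: "\<And>h. card ((\<lambda>g. restrict g G) ` {g \<in> S. restrict g {1..s} = h}) \<le> K"
  shows "card S \<le> K * N ^ card {t \<in> free_steps k p. Suc t \<notin> G} * B ^ k"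
proof -
  let ?T = "{t \<in> free_steps k p. Suc t \<notin> G}"
  have "revealed s G k = {1..k}"
    using G by (auto simp: revealed_def)
  then have "S = (\<lambda>g. restrict g (revealed s G k)) ` S"
    using S image_restrict_PiE[of S "{1..k}" "{1..N}"] by (auto simp: pairing_tuples_def)
  also have "card \<dots> \<le> (\<Prod>t<k. if t = s then K else if Suc t \<in> G then 1
      else if t \<in> free_steps k p then N else B)"
  proof (rule card_image_restrict_le_prod[where U = "revealed s G"])
    show "finite S"
      using S finite_pairing_tuples by (rule finite_subset)
    show "revealed s G 0 = {}"
      by (simp add: revealed_def)
  qed (rule card_reveal_step_le[OF p S G(2,3) block])
  also have "\<dots> \<le> K * N ^ card ?T * B ^ k"
    using G one_le_B by (intro prod_le_cases) (auto simp: free_steps_def)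
  finally show ?thesis .
qed

end

definition partner_triples :: "pair_relations \<Rightarrow> nat \<Rightarrow> nat \<Rightarrow> (nat \<times> nat \<times> nat) set" where
  "partner_triples R N p =
     {(q, r, s). q \<in> {1..N} \<and> r \<in> {1..N} \<and> s \<in> {1..N} \<and> ((p, q), (r, s)) \<in> R N}"

definition max_card_partner_triples :: "pair_relations \<Rightarrow> nat \<Rightarrow> nat" where
  "max_card_partner_triples R N = Max ((\<lambda>p. card (partner_triples R N p)) ` {1..N})"

definition backtrack_triples :: "pair_relations \<Rightarrow> nat \<Rightarrow> (nat \<times> nat \<times> nat) set" where
  "backtrack_triples R N =
     {(p, q, r). p \<in> {1..N} \<and> q \<in> {1..N} \<and> r \<in> {1..N} \<and> ((p, q), (q, r)) \<in> R N \<and> r \<noteq> p}"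

lemma finite_partner_triples: "finite (partner_triples R N p)"
  by (rule finite_subset[of _ "{1..N} \<times> {1..N} \<times> {1..N}"]) (auto simp: partner_triples_def)

lemma finite_backtrack_triples: "finite (backtrack_triples R N)"
  by (rule finite_subset[of _ "{1..N} \<times> {1..N} \<times> {1..N}"]) (auto simp: backtrack_triples_def)

lemma card_partner_triples_le_max:
  "p \<in> {1..N} \<Longrightarrow> card (partner_triples R N p) \<le> max_card_partner_triples R N"
  unfolding max_card_partner_triples_def by (rule Max_ge) auto

context completion_bounded
begin

lemma card_pairing_tuples_nested_le:
  assumes p: "pairing k p" and lm: "1 \<le> l" "Suc l < m" "m < k" "p l = m"
    and free: "m - 1 \<in> free_steps k p"
  shows "card (pairing_tuples R N k p) \<le> max_card_partner_triples R N * N ^ (k div 2 - 1) * B ^ k"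
proof -
  let ?G = "{Suc l, m, Suc m}"
  have "card (pairing_tuples R N k p)
      \<le> max_card_partner_triples R N * N ^ card {t \<in> free_steps k p. Suc t \<notin> ?G} * B ^ k"
  proof (rule card_le_reveal[OF p order.refl])
    show "l < k" "?G \<subseteq> {Suc l..k}" "Suc l \<in> ?G"
      using lm by auto
    fix h
    let ?X = "{g \<in> pairing_tuples R N k p. restrict g {1..l} = h}"
    show "card ((\<lambda>g. restrict g ?G) ` ?X) \<le> max_card_partner_triples R N"
    proof (cases "?X = {}")
      case False
      then obtain g0 where g0: "g0 \<in> ?X"
        by blast
      have "card ((\<lambda>g. restrict g ?G) ` ?X) \<le> card (partner_triples R N (g0 l))"
      proof (rule card_restrict_triple_le[OF finite_partner_triples])
        fix g assume g: "g \<in> ?X"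
        have "restrict g {1..l} l = restrict g0 {1..l} l"
          using g g0 by simp
        then have "g l = g0 l"
          using lm by simp
        moreover have "cyc_next k l = Suc l" "cyc_next k m = Suc m"
          using lm by (auto simp: cyc_next_def)
        ultimately show "(g (Suc l), g m, g (Suc m)) \<in> partner_triples R N (g0 l)"
          using pairing_tuples_related[of g R N k p l] pairing_tuples_range[of g R N k p] g lm
          by (auto simp: partner_triples_def)
      qed
      also have "\<dots> \<le> max_card_partner_triples R N"
        using g0 lm pairing_tuples_range[of g0 R N k p l] by (intro card_partner_triples_le_max) auto
      finally show ?thesis .
    qed (simp only: image_empty card.empty le0)
  qed
  moreover have "{t \<in> free_steps k p. Suc t \<notin> ?G} = free_steps k p - {l, m - 1}"
    using lm pairingD(3)[OF p, of l] by (auto simp: free_steps_def)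
  moreover have "l \<in> free_steps k p"
    using lm by (auto simp: free_steps_def)
  ultimately show ?thesis
    using card_free_steps_Diff[OF p _ _ free] lm by simp
qed

lemma card_pairing_tuples_backtrack_le:
  assumes p: "pairing k p" and l: "1 \<le> l" "Suc (Suc l) \<le> k" "p l = Suc l"
    and free: "l - 1 \<in> free_steps k p"
  shows "card {i \<in> pairing_tuples R N k p. i (Suc (Suc l)) \<noteq> i l}
    \<le> card (backtrack_triples R N) * N ^ (k div 2 - 1) * B ^ k"
proof -
  let ?S = "{i \<in> pairing_tuples R N k p. i (Suc (Suc l)) \<noteq> i l}"
  let ?G = "{l, Suc l, Suc (Suc l)}"
  have "card ?S \<le> card (backtrack_triples R N) * N ^ card {t \<in> free_steps k p. Suc t \<notin> ?G} * B ^ k"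
  proof (rule card_le_reveal[OF p])
    show "?S \<subseteq> pairing_tuples R N k p" "l - 1 < k" "?G \<subseteq> {Suc (l - 1)..k}" "Suc (l - 1) \<in> ?G"
      using l by auto
    fix h
    show "card ((\<lambda>g. restrict g ?G) ` {g \<in> ?S. restrict g {1..l - 1} = h}) \<le> card (backtrack_triples R N)"
    proof (rule card_restrict_triple_le[OF finite_backtrack_triples])
      fix g assume g: "g \<in> {g \<in> ?S. restrict g {1..l - 1} = h}"
      have "cyc_next k l = Suc l" "cyc_next k (Suc l) = Suc (Suc l)"
        using l by (auto simp: cyc_next_def)
      then show "(g l, g (Suc l), g (Suc (Suc l))) \<in> backtrack_triples R N"
        using pairing_tuples_related[of g R N k p l] pairing_tuples_range[of g R N k p] g l
        by (auto simp: backtrack_triples_def)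
    qed
  qed
  moreover have "{t \<in> free_steps k p. Suc t \<notin> ?G} = free_steps k p - {l - 1, l}"
    using l pairingD(3)[OF p, of l] by (auto simp: free_steps_def)
  moreover have "l \<in> free_steps k p"
    using l by (auto simp: free_steps_def)
  ultimately show ?thesis
    using card_free_steps_Diff[OF p _ free] l by simp
qed

end

definition skip_pair :: "nat \<Rightarrow> nat \<Rightarrow> nat" where
  "skip_pair l t = (if t < l then t else t + 2)"

definition unskip_pair :: "nat \<Rightarrow> nat \<Rightarrow> nat" where
  "unskip_pair l v = (if v \<le> l then v else v - 2)"

definition contract_pairing :: "nat \<Rightarrow> (nat \<Rightarrow> nat) \<Rightarrow> nat \<Rightarrow> nat" where
  "contract_pairing l p t = unskip_pair l (p (skip_pair l t))"

definition contract_tuple :: "nat \<Rightarrow> nat \<Rightarrow> (nat \<Rightarrow> nat) \<Rightarrow> nat \<Rightarrow> nat" where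
  "contract_tuple k l i = restrict (\<lambda>t. i (skip_pair l t)) {1..k - 2}"

lemma unskip_skip_pair [simp]: "unskip_pair l (skip_pair l t) = t"
  by (simp add: skip_pair_def unskip_pair_def)

lemma skip_unskip_pair: "v \<noteq> l \<Longrightarrow> v \<noteq> Suc l \<Longrightarrow> skip_pair l (unskip_pair l v) = v"
  by (auto simp: skip_pair_def unskip_pair_def)

lemma skip_pair_neq: "skip_pair l t \<noteq> l" "skip_pair l t \<noteq> Suc l"
  by (auto simp: skip_pair_def)

lemma skip_pair_range: "t \<in> {1..k - 2} \<Longrightarrow> skip_pair l t \<in> {1..k}"
  by (auto simp: skip_pair_def)

lemma unskip_pair_range:
  "v \<in> {1..k} \<Longrightarrow> v \<noteq> Suc l \<Longrightarrow> 1 \<le> l \<Longrightarrow> Suc (Suc l) \<le> k \<Longrightarrow> unskip_pair l v \<in> {1..k - 2}"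
  by (auto simp: unskip_pair_def)

lemma unskip_pair_less:
  "x < y \<Longrightarrow> x \<notin> {l, Suc l} \<Longrightarrow> y \<notin> {l, Suc l} \<Longrightarrow> unskip_pair l x < unskip_pair l y"
  by (auto simp: unskip_pair_def)

text \<open>Removing positions \<open>l, l + 1\<close> from the cycle \<open>1, \<dots>, k\<close> joins \<open>l - 1\<close> (or \<open>k\<close>, when \<open>l = 1\<close>)
  to \<open>l + 2\<close> in place of \<open>l\<close>.\<close>
lemma cyc_next_skip_pair:
  assumes "t \<in> {1..k - 2}" "1 \<le> l" "Suc (Suc l) \<le> k"
  shows "cyc_next k (skip_pair l t) = skip_pair l (cyc_next (k - 2) t)
    \<or> cyc_next k (skip_pair l t) = l \<and> skip_pair l (cyc_next (k - 2) t) = Suc (Suc l)"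
  using assms by (auto simp: cyc_next_def skip_pair_def)

context
  fixes k l :: nat and p :: "nat \<Rightarrow> nat"
  assumes p: "pairing k p" and l: "1 \<le> l" "Suc (Suc l) \<le> k" "p l = Suc l"
begin

lemma pairing_Suc_adjacent: "p (Suc l) = l"
  using pairingD(3)[OF p, of l] l by simp

lemma pairing_adjacent_iff: "u \<in> {1..k} \<Longrightarrow> p u \<in> {l, Suc l} \<longleftrightarrow> u \<in> {l, Suc l}"
  using pairingD(3)[OF p, of u] l pairing_Suc_adjacent by auto

lemma contract_pairing_skip:
  assumes "t \<in> {1..k - 2}"
  shows "contract_pairing l p t \<in> {1..k - 2}" "skip_pair l (contract_pairing l p t) = p (skip_pair l t)"
proof -
  have "skip_pair l t \<in> {1..k}" "skip_pair l t \<notin> {l, Suc l}"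
    using skip_pair_range[OF assms] skip_pair_neq by auto
  then have "p (skip_pair l t) \<in> {1..k}" "p (skip_pair l t) \<notin> {l, Suc l}"
    using pairingD(1)[OF p] pairing_adjacent_iff by auto
  then show "contract_pairing l p t \<in> {1..k - 2}" "skip_pair l (contract_pairing l p t) = p (skip_pair l t)"
    using unskip_pair_range[of _ k l] skip_unskip_pair l by (auto simp: contract_pairing_def)
qed

lemma pairing_contract_pairing: "pairing (k - 2) (contract_pairing l p)"
  unfolding pairing_def
proof
  fix t assume t: "t \<in> {1..k - 2}"
  have "skip_pair l t \<in> {1..k}"
    using skip_pair_range[OF t] .
  then have "p (skip_pair l t) \<noteq> skip_pair l t" "p (p (skip_pair l t)) = skip_pair l t"
    using pairingD[OF p] by auto
  then show "contract_pairing l p t \<in> {1..k - 2} \<and> contract_pairing l p t \<noteq> t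
      \<and> contract_pairing l p (contract_pairing l p t) = t"
    using contract_pairing_skip[OF t] by (metis contract_pairing_def unskip_skip_pair)
qed

lemma crossing_contract_pairing:
  assumes "crossing_pairing k p"
  shows "crossing_pairing (k - 2) (contract_pairing l p)"
proof -
  obtain a b c d where abcd: "1 \<le> a" "a < b" "b < c" "c < d" "d \<le> k" "p a = c" "p b = d"
    using assms unfolding crossing_pairing_def by blast
  have "a \<notin> {l, Suc l}" "b \<notin> {l, Suc l}"
    using abcd l(3) pairing_Suc_adjacent by auto
  moreover have "c \<notin> {l, Suc l}" "d \<notin> {l, Suc l}"
    using pairing_adjacent_iff[of a] pairing_adjacent_iff[of b] calculation abcd by auto
  ultimately have "unskip_pair l a < unskip_pair l b" "unskip_pair l b < unskip_pair l c"
      "unskip_pair l c < unskip_pair l d"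
      "contract_pairing l p (unskip_pair l a) = unskip_pair l c"
      "contract_pairing l p (unskip_pair l b) = unskip_pair l d"
    using abcd by (auto intro: unskip_pair_less simp: contract_pairing_def skip_unskip_pair)
  moreover have "1 \<le> unskip_pair l a" "unskip_pair l d \<le> k - 2"
    using unskip_pair_range[of a k l] unskip_pair_range[of d k l] abcd \<open>a \<notin> {l, Suc l}\<close>
      \<open>d \<notin> {l, Suc l}\<close> l by auto
  ultimately show ?thesis
    unfolding crossing_pairing_def by blast
qed

lemma contract_tuple_cyc_next:
  assumes "i (Suc (Suc l)) = i l" "t \<in> {1..k - 2}"
  shows "contract_tuple k l i (cyc_next (k - 2) t) = i (cyc_next k (skip_pair l t))"
proof -
  have "cyc_next (k - 2) t \<in> {1..k - 2}"
    using assms(2) by (auto simp: cyc_next_def)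
  then show ?thesis
    using cyc_next_skip_pair[OF assms(2) l(1,2)] assms(1) by (auto simp: contract_tuple_def)
qed

lemma contract_tuple_mem:
  assumes i: "i \<in> pairing_tuples R N k p" and ret: "i (Suc (Suc l)) = i l"
  shows "contract_tuple k l i \<in> pairing_tuples R N (k - 2) (contract_pairing l p)"
  unfolding pairing_tuples_def
proof (intro CollectI conjI ballI)
  show "contract_tuple k l i \<in> {1..k - 2} \<rightarrow>\<^sub>E {1..N}"
    using pairing_tuples_range[OF i] skip_pair_range by (auto simp: contract_tuple_def)
  fix t assume t: "t \<in> {1..k - 2}"
  note ct = contract_pairing_skip[OF t]
  have "((i (skip_pair l t), i (cyc_next k (skip_pair l t))),
      (i (p (skip_pair l t)), i (cyc_next k (p (skip_pair l t))))) \<in> R N"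
    using pairing_tuples_related[OF i skip_pair_range[OF t]] .
  then show "((contract_tuple k l i t, contract_tuple k l i (cyc_next (k - 2) t)),
      (contract_tuple k l i (contract_pairing l p t),
       contract_tuple k l i (cyc_next (k - 2) (contract_pairing l p t)))) \<in> R N"
    using contract_tuple_cyc_next[OF ret t] contract_tuple_cyc_next[OF ret ct(1)] t ct
    by (simp add: contract_tuple_def)
qed

lemma contract_tuple_unskip:
  assumes "i (Suc (Suc l)) = i l" "t \<in> {1..k}" "t \<noteq> Suc l"
  shows "i t = contract_tuple k l i (unskip_pair l t)"
proof (cases "t = l")
  case True
  have "l \<le> k - 2"
    using l by linarith
  then show ?thesis
    using True assms(1) l by (simp add: contract_tuple_def skip_pair_def unskip_pair_def)
next
  case False
  then show ?thesis
    using assms(2,3) unskip_pair_range[of t k l] l skip_unskip_pair[of t l]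
    by (simp add: contract_tuple_def)
qed

lemma card_returning_tuples_le:
  "card {i \<in> pairing_tuples R N k p. i (Suc (Suc l)) = i l}
     \<le> N * card (pairing_tuples R N (k - 2) (contract_pairing l p))"
proof -
  let ?S = "{i \<in> pairing_tuples R N k p. i (Suc (Suc l)) = i l}"
  let ?f = "\<lambda>i. (contract_tuple k l i, i (Suc l))"
  have "inj_on ?f ?S"
  proof (rule inj_onI)
    fix i i' assume i: "i \<in> ?S" and i': "i' \<in> ?S" and eq: "?f i = ?f i'"
    show "i = i'"
    proof
      fix t
      show "i t = i' t"
      proof (cases "t \<in> {1..k} \<and> t \<noteq> Suc l")
        case True
        have "i t = contract_tuple k l i (unskip_pair l t)"
          using contract_tuple_unskip True i by blast
        also have "\<dots> = contract_tuple k l i' (unskip_pair l t)"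
          using eq by simp
        also have "\<dots> = i' t"
          using contract_tuple_unskip True i' by (metis (mono_tags, lifting) mem_Collect_eq)
        finally show ?thesis .
      next
        case False
        then consider "t \<notin> {1..k}" | "t = Suc l"
          by blast
        then show ?thesis
        proof cases
          case 1
          have "i \<in> {1..k} \<rightarrow>\<^sub>E {1..N}" "i' \<in> {1..k} \<rightarrow>\<^sub>E {1..N}"
            using i i' by (simp_all add: pairing_tuples_def)
          then show ?thesis
            using PiE_arb 1 by metis
        next
          case 2
          then show ?thesis
            using eq by simp
        qed
      qed
    qed
  qed
  moreover have "?f ` ?S \<subseteq> pairing_tuples R N (k - 2) (contract_pairing l p) \<times> {1..N}"
    using contract_tuple_mem pairing_tuples_range l by auto
  ultimately have "card ?S \<le> card (pairing_tuples R N (k - 2) (contract_pairing l p) \<times> {1..N})"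
    by (rule card_inj_on_le) (simp add: finite_pairing_tuples)
  then show ?thesis
    by (simp add: card_cartesian_product mult.commute)
qed

end

context completion_bounded
begin

lemma ratio_pairing_tuples_adjacent_le:
  assumes "pairing k p" "1 \<le> l" "Suc (Suc l) \<le> k" "p l = Suc l" "l - 1 \<in> free_steps k p"
    and "1 \<le> N"
  shows "real (card (pairing_tuples R N k p)) / real N ^ (k div 2 + 1)
    \<le> real (card (pairing_tuples R N (k - 2) (contract_pairing l p))) / real N ^ ((k - 2) div 2 + 1)
      + real (B ^ k) * (real (card (backtrack_triples R N)) / real N ^ 2)"
proof -
  let ?returning = "{i \<in> pairing_tuples R N k p. i (Suc (Suc l)) = i l}"
  let ?backtracking = "{i \<in> pairing_tuples R N k p. i (Suc (Suc l)) \<noteq> i l}"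
  have "card (pairing_tuples R N k p) = card (?returning \<union> ?backtracking)"
    by (rule arg_cong[where f = card]) auto
  also have "\<dots> \<le> card ?returning + card ?backtracking"
    by (rule card_Un_le)
  also have "\<dots> \<le> N * card (pairing_tuples R N (k - 2) (contract_pairing l p))
      + card (backtrack_triples R N) * N ^ (k div 2 - 1) * B ^ k"
    using card_returning_tuples_le[OF assms(1-4)] card_pairing_tuples_backtrack_le[OF assms(1-5)]
    by (rule add_mono)
  finally have "real (card (pairing_tuples R N k p)) / real N ^ (k div 2 + 1)
    \<le> real (card (pairing_tuples R N (k - 2) (contract_pairing l p))) / real N ^ (k div 2)
      + real (B ^ k) * (real (card (backtrack_triples R N)) / real N ^ 2)"
    using assms(2,3,6) by (intro ratio_le_split) auto
  moreover have "(k - 2) div 2 + 1 = k div 2"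
    using assms(2,3) by simp
  ultimately show ?thesis
    by (simp only:)
qed

lemma ratio_pairing_tuples_nested_le:
  assumes "pairing k p" "1 \<le> l" "Suc l < m" "m < k" "p l = m" "m - 1 \<in> free_steps k p"
    and "1 \<le> N"
  shows "real (card (pairing_tuples R N k p)) / real N ^ (k div 2 + 1)
    \<le> real (B ^ k) * (real (max_card_partner_triples R N) / real N ^ 2)"
proof -
  have "card (pairing_tuples R N k p) \<le> N * 0 + max_card_partner_triples R N * N ^ (k div 2 - 1) * B ^ k"
    using card_pairing_tuples_nested_le[OF assms(1-6)] by simp
  moreover have "1 \<le> k div 2"
    using assms(2-4) by simp
  ultimately have "real (card (pairing_tuples R N k p)) / real N ^ (k div 2 + 1)
    \<le> real 0 / real N ^ (k div 2) + real (B ^ k) * (real (max_card_partner_triples R N) / real N ^ 2)"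
    using assms(7) by (rule ratio_le_split)
  then show ?thesis
    by simp
qed

lemma pairing_tuples_negligible:
  assumes C1: "(\<lambda>N. real (max_card_partner_triples R N) / real N ^ 2) \<longlonglongrightarrow> 0"
    and C3: "(\<lambda>N. real (card (backtrack_triples R N)) / real N ^ 2) \<longlonglongrightarrow> 0"
  shows "pairing k p \<Longrightarrow> crossing_pairing k p \<Longrightarrow>
    (\<lambda>N. real (card (pairing_tuples R N k p)) / real N ^ (k div 2 + 1)) \<longlonglongrightarrow> 0"
proof (induction k arbitrary: p rule: less_induct)
  case (less k)
  obtain l m where lm: "1 \<le> l" "l < m" "m < k" "p l = m"
    and opens: "\<And>t. 1 \<le> t \<Longrightarrow> t < m \<Longrightarrow> t < p t"
    using crossing_pairing_first_closer[OF less.prems] by blast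
  have "t - 1 \<in> free_steps k p" if "t \<le> m" for t
  proof (cases "t \<le> 1")
    case False
    then have "t - 1 < p (t - 1)"
      using opens[of "t - 1"] that by simp
    then show ?thesis
      using that lm by (simp add: free_steps_def)
  qed (use lm in \<open>simp add: free_steps_def\<close>)
  then have free: "l - 1 \<in> free_steps k p" "m - 1 \<in> free_steps k p"
    using lm by simp_all
  show ?case
  proof (cases "m = Suc l")
    case True
    let ?q = "contract_pairing l p"
    have adjacent: "Suc (Suc l) \<le> k" "p l = Suc l"
      using lm True by auto
    have "(\<lambda>N. real (card (pairing_tuples R N (k - 2) ?q)) / real N ^ ((k - 2) div 2 + 1)) \<longlonglongrightarrow> 0"
      using less.IH[of "k - 2" ?q] lm
        pairing_contract_pairing[OF less.prems(1) lm(1) adjacent]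
        crossing_contract_pairing[OF less.prems(1) lm(1) adjacent less.prems(2)] by simp
    then have "(\<lambda>N. real (card (pairing_tuples R N (k - 2) ?q)) / real N ^ ((k - 2) div 2 + 1)
        + real (B ^ k) * (real (card (backtrack_triples R N)) / real N ^ 2)) \<longlonglongrightarrow> 0"
      using tendsto_add[OF _ tendsto_mult[OF tendsto_const C3]] by fastforce
    then show ?thesis
      by (rule LIMSEQ_zero_if_le[OF _
            ratio_pairing_tuples_adjacent_le[OF less.prems(1) lm(1) adjacent free(1)]]) simp_all
  next
    case False
    then have "Suc l < m"
      using lm by simp
    have "(\<lambda>N. real (B ^ k) * (real (max_card_partner_triples R N) / real N ^ 2)) \<longlonglongrightarrow> 0"
      using tendsto_mult[OF tendsto_const C1] by simp
    then show ?thesis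
      by (rule LIMSEQ_zero_if_le[OF _
            ratio_pairing_tuples_nested_le[OF less.prems(1) lm(1) \<open>Suc l < m\<close> lm(3,4) free(2)]]) simp_all
  qed
qed

end

definition partner :: "nat set set \<Rightarrow> nat \<Rightarrow> nat" where
  "partner \<pi> l = (THE m. m \<noteq> l \<and> {l, m} \<in> \<pi>)"

lemma pair_partition_ex1_partner:
  assumes pp: "pair_partition k \<pi>" and l: "l \<in> {1..k}"
  shows "\<exists>!m. m \<noteq> l \<and> {l, m} \<in> \<pi>"
proof -
  have po: "partition_on {1..k} \<pi>" and two: "\<And>C. C \<in> \<pi> \<Longrightarrow> card C = 2"
    using pp unfolding pair_partition_def by auto
  obtain C where C: "C \<in> \<pi>" "l \<in> C"
    using partition_onD1[OF po] l by blast
  then obtain m where m: "m \<noteq> l" "C = {l, m}"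
    using two[OF C(1)] by (auto simp: card_2_iff doubleton_eq_iff)
  show ?thesis
  proof (rule ex1I[of _ m])
    show "m \<noteq> l \<and> {l, m} \<in> \<pi>"
      using m C by simp
    fix m' assume m': "m' \<noteq> l \<and> {l, m'} \<in> \<pi>"
    then have "{l, m'} = {l, m}"
      using disjointD[OF partition_onD2[OF po], of "{l, m'}" "{l, m}"] m C by blast
    then show "m' = m"
      using m m' by (auto simp: doubleton_eq_iff)
  qed
qed

lemma partner_eq:
  assumes "pair_partition k \<pi>" "l \<in> {1..k}" "m \<noteq> l" "{l, m} \<in> \<pi>"
  shows "partner \<pi> l = m"
  unfolding partner_def
  by (rule the1_equality[OF pair_partition_ex1_partner[OF assms(1,2)]]) (use assms(3,4) in blast)

lemma partner_block:
  assumes pp: "pair_partition k \<pi>" and l: "l \<in> {1..k}"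
  shows "partner \<pi> l \<noteq> l" "{l, partner \<pi> l} \<in> \<pi>" "partner \<pi> l \<in> {1..k}"
proof -
  show "partner \<pi> l \<noteq> l" "{l, partner \<pi> l} \<in> \<pi>"
    unfolding partner_def using theI'[OF pair_partition_ex1_partner[OF assms]] by simp_all
  then show "partner \<pi> l \<in> {1..k}"
    using partition_onD1[of "{1..k}" \<pi>] pp unfolding pair_partition_def by blast
qed

lemma pairing_partner:
  assumes pp: "pair_partition k \<pi>"
  shows "pairing k (partner \<pi>)"
  unfolding pairing_def
proof
  fix l assume l: "l \<in> {1..k}"
  note block = partner_block[OF pp l]
  have "partner \<pi> (partner \<pi> l) = l"
    using block by (intro partner_eq[OF pp]) (auto simp: insert_commute)
  then show "partner \<pi> l \<in> {1..k} \<and> partner \<pi> l \<noteq> l \<and> partner \<pi> (partner \<pi> l) = l"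
    using block by simp
qed

lemma crossing_partner:
  assumes pp: "pair_partition k \<pi>" and cr: "crossing k \<pi>"
  shows "crossing_pairing k (partner \<pi>)"
proof -
  obtain a b c d where abcd: "1 \<le> a" "a < b" "b < c" "c < d" "d \<le> k" "{a, c} \<in> \<pi>" "{b, d} \<in> \<pi>"
    using cr unfolding crossing_def by blast
  then have "partner \<pi> a = c" "partner \<pi> b = d"
    by (auto intro: partner_eq[OF pp])
  then show ?thesis
    unfolding crossing_pairing_def using abcd by blast
qed

lemma E_set_subset_pairing_tuples:
  assumes pp: "pair_partition k \<pi>"
  shows "E_set R N k \<pi> \<subseteq> pairing_tuples R N k (partner \<pi>)"
proof
  fix i assume "i \<in> E_set R N k \<pi>"
  then have range: "i \<in> {1..k} \<rightarrow>\<^sub>E {1..N}"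
    and related: "\<And>l m. l \<in> {1..k} \<Longrightarrow> m \<in> {1..k} \<Longrightarrow>
      (\<exists>B\<in>\<pi>. l \<in> B \<and> m \<in> B) \<longleftrightarrow> ((i l, i (cyc_next k l)), (i m, i (cyc_next k m))) \<in> R N"
    unfolding E_set_def by auto
  show "i \<in> pairing_tuples R N k (partner \<pi>)"
    unfolding pairing_tuples_def
  proof (intro CollectI conjI range ballI)
    fix l assume l: "l \<in> {1..k}"
    have "\<exists>B\<in>\<pi>. l \<in> B \<and> partner \<pi> l \<in> B"
      using partner_block(2)[OF pp l] by blast
    then show "((i l, i (cyc_next k l)), (i (partner \<pi> l), i (cyc_next k (partner \<pi> l)))) \<in> R N"
      using related[OF l partner_block(3)[OF pp l]] by blast
  qed
qed

text \<open>Only (C1)--(C3) enter the upper bound.\<close>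
theorem mainTheorem7:
  fixes R :: "nat \<Rightarrow> ((nat \<times> nat) \<times> (nat \<times> nat)) set"
    and k :: nat and \<pi> :: "nat set set"
  assumes equiv: "\<And>N. equiv ({1..N} \<times> {1..N}) (R N)"
    and flip: "\<And>N p q. p \<in> {1..N} \<Longrightarrow> q \<in> {1..N} \<Longrightarrow> ((p, q), (q, p)) \<in> R N"
    and C1: "(\<lambda>N. real (Max ((\<lambda>p. card {(q, r, s). q \<in> {1..N} \<and> r \<in> {1..N} \<and> s \<in> {1..N}
                 \<and> ((p, q), (r, s)) \<in> R N}) ` {1..N})) / real N ^ 2) \<longlonglongrightarrow> 0"
    and C2: "\<exists>B::nat. \<forall>N p q r. p \<in> {1..N} \<longrightarrow> q \<in> {1..N} \<longrightarrow> r \<in> {1..N} \<longrightarrow>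
                 card {s \<in> {1..N}. ((p, q), (r, s)) \<in> R N} \<le> B"
    and C3: "(\<lambda>N. real (card {(p, q, r). p \<in> {1..N} \<and> q \<in> {1..N} \<and> r \<in> {1..N}
                 \<and> ((p, q), (q, r)) \<in> R N \<and> r \<noteq> p}) / real N ^ 2) \<longlonglongrightarrow> 0"
    and k_even: "even k"
    and pp: "pair_partition k \<pi>"
    and cr: "crossing k \<pi>"
  shows "(\<lambda>N. real (card (E_set R N k \<pi>)) / real N ^ (k div 2 + 1)) \<longlonglongrightarrow> 0"
proof -
  obtain B where "\<forall>N p q r. p \<in> {1..N} \<longrightarrow> q \<in> {1..N} \<longrightarrow> r \<in> {1..N} \<longrightarrow>
      card {s \<in> {1..N}. ((p, q), (r, s)) \<in> R N} \<le> B"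
    using C2 by blast
  then interpret completion_bounded R "Suc B"
    by unfold_locales (auto intro: le_SucI)
  have "(\<lambda>N. real (max_card_partner_triples R N) / real N ^ 2) \<longlonglongrightarrow> 0"
    using C1 unfolding max_card_partner_triples_def partner_triples_def .
  moreover have "(\<lambda>N. real (card (backtrack_triples R N)) / real N ^ 2) \<longlonglongrightarrow> 0"
    using C3 unfolding backtrack_triples_def .
  ultimately have lim: "(\<lambda>N. real (card (pairing_tuples R N k (partner \<pi>))) / real N ^ (k div 2 + 1)) \<longlonglongrightarrow> 0"
    using pairing_partner[OF pp] crossing_partner[OF pp cr] by (rule pairing_tuples_negligible)
  have "real (card (E_set R N k \<pi>)) / real N ^ (k div 2 + 1)
      \<le> real (card (pairing_tuples R N k (partner \<pi>))) / real N ^ (k div 2 + 1)" for N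
    using card_mono[OF finite_pairing_tuples E_set_subset_pairing_tuples[OF pp]]
    by (intro divide_right_mono) simp_all
  then show ?thesis
    by (rule LIMSEQ_zero_if_le[OF lim]) simp
qed

end
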